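(* Let $M_b=\langle S_b,A_b,T_b\rangle$ be the $b$-bounded MDP of a relational MDP $K=\langle\Sigma,\Delta\rangle$, $\phi$ a relational pCTL sentence, and $C=consts(\phi)\cup consts(\Delta)$. Let $s_1,s_2\in S_b$ with $s_1\sim_C s_2$ via the bijection $f$ (extended by the identity on $C$), and let $\delta=\{H_1\xleftarrow{p_1:\alpha}B,\dots,H_n\xleftarrow{p_n:\alpha}B\}\in\Delta$. For a substitution $\theta_1$ with $s_1\preceq_{\theta_1}B$ and the corresponding indistinguishable substitution $\theta_2=f\circ\theta_1$, consider the ground transition sets $$t(s_1,\alpha\theta_1)=\{h_{1,i}\xleftarrow{p_i:\alpha\theta_1}s_1 \mid H_i\xleftarrow{p_i:\alpha}B\in\delta,\ h_{1,i}=(s_1\setminus B\theta_1)\cup H_i\theta_1\},$$ $$t(s_2,\alpha\theta_2)=\{h_{2,i}\xleftarrow{p_i:\alpha\theta_2}s_2 \mid H_i\xleftarrow{p_i:\alpha}B\in\delta,\ h_{2,i}=(s_2\setminus B\theta_2)\cup H_i\theta_2\}.$$ Then these two sets of ground transitions share the same transition probabilities: $s_1$ under $\alpha\theta_1$ and $s_2$ under $\alpha\theta_2$ have identical probabilities of going to each class of mutually indistinguishable states (under $C$).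
   Context: Relational logic: terms are variables or constants; atoms $p(t_1,\dots,t_m)$; an abstract state is a finite set of atoms. Object identity assumption: distinct terms in a conjunction denote distinct objects. OI-subsumption: $A\preceq_\theta B$ iff $\theta$ is a substitution with $B\theta\subseteq A$ mapping distinct terms of $B$ to distinct terms. A Herbrand interpretation is a set of ground atoms; $\mathit{adom}(s)=consts(s)$. Relational MDP $K=\langle\Sigma,\Delta\rangle$, $\Sigma=\langle R,D\rangle$ ($R$ finite relation symbols, $D$ possibly infinite constants); $\Delta$ a finite set of abstract transitions, each a set of rules $\{H_1\xleftarrow{p_1:\alpha}B,\dots,H_n\xleftarrow{p_n:\alpha}B\}$ with abstract states $H_i,B$, $p_i\in[0,1]$, $\sum_ip_i=1$, $vars(H_i)\subseteq vars(B)$. The underlying ground MDP has Herbrand interpretations as states; from $s$, for each $\theta$ with $s\preceq_\theta B$, action $\alpha\theta$ leads to $(s\setminus B\theta)\cup H_i\theta$ with probability $p_i$. The $b$-bounded MDP $M_b$ restricts to states $s$ with $|\mathit{adom}(s)|\le b$ and transitions between such states. Indistinguishability: for states $s,s'$ with $C\subseteq consts(s)\cap consts(s')$, $s\sim_C s'$ iff there is a bijection $f:consts(s)\setminus C\to consts(s')\setminus C$ such that renaming the constants of $s$ by $f$ (fixing $C$) yields $s'$, i.e. $f(s)=s'$. Indistinguishable states are renamings of one another on the constants outside $C$. *)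

theory Defs
  imports Complex_Main
begin

datatype ('c, 'v) trm = Var 'v | Cst 'c

type_synonym ('r, 'c, 'v) atom = "'r \<times> ('c, 'v) trm list"
type_synonym ('r, 'c) gatom = "'r \<times> 'c list"

fun trm_consts :: "('c, 'v) trm \<Rightarrow> 'c set" where
  "trm_consts (Var v) = {}"
| "trm_consts (Cst c) = {c}"

fun trm_vars :: "('c, 'v) trm \<Rightarrow> 'v set" where
  "trm_vars (Var v) = {v}"
| "trm_vars (Cst c) = {}"

definition atom_consts :: "('r, 'c, 'v) atom \<Rightarrow> 'c set" where
  "atom_consts a = (\<Union>t\<in>set (snd a). trm_consts t)"

definition atom_vars :: "('r, 'c, 'v) atom \<Rightarrow> 'v set" where
  "atom_vars a = (\<Union>t\<in>set (snd a). trm_vars t)"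

definition abs_consts :: "('r, 'c, 'v) atom set \<Rightarrow> 'c set" where
  "abs_consts A = (\<Union>a\<in>A. atom_consts a)"

definition abs_vars :: "('r, 'c, 'v) atom set \<Rightarrow> 'v set" where
  "abs_vars A = (\<Union>a\<in>A. atom_vars a)"

definition abs_terms :: "('r, 'c, 'v) atom set \<Rightarrow> ('c, 'v) trm set" where
  "abs_terms A = (\<Union>a\<in>A. set (snd a))"

definition gconsts :: "('r, 'c) gatom set \<Rightarrow> 'c set" where
  "gconsts s = (\<Union>a\<in>s. set (snd a))"

abbreviation adom :: "('r, 'c) gatom set \<Rightarrow> 'c set" where
  "adom s \<equiv> gconsts s"

fun subst_trm :: "('v \<Rightarrow> 'c) \<Rightarrow> ('c, 'v) trm \<Rightarrow> 'c" where
  "subst_trm \<theta> (Var v) = \<theta> v"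
| "subst_trm \<theta> (Cst c) = c"

definition subst_atom :: "('v \<Rightarrow> 'c) \<Rightarrow> ('r, 'c, 'v) atom \<Rightarrow> ('r, 'c) gatom" where
  "subst_atom \<theta> a = (fst a, map (subst_trm \<theta>) (snd a))"

definition subst_state :: "('v \<Rightarrow> 'c) \<Rightarrow> ('r, 'c, 'v) atom set \<Rightarrow> ('r, 'c) gatom set" where
  "subst_state \<theta> A = subst_atom \<theta> ` A"

definition oi_subsumes :: "('r, 'c) gatom set \<Rightarrow> ('v \<Rightarrow> 'c) \<Rightarrow> ('r, 'c, 'v) atom set \<Rightarrow> bool" where
  "oi_subsumes s \<theta> B \<longleftrightarrow> subst_state \<theta> B \<subseteq> s \<and> inj_on (subst_trm \<theta>) (abs_terms B)"

text \<open>An abstract transition {H_i <-(p_i : alpha)- B}: body B, action atom alpha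
  (action symbols of type 'act), and the list of heads with probabilities.\<close>
datatype ('r, 'act, 'c, 'v) abs_trans =
  ATrans (body: "('r, 'c, 'v) atom set") (act: "('act, 'c, 'v) atom")
         (rules: "(('r, 'c, 'v) atom set \<times> real) list")

definition trans_consts :: "('r, 'act, 'c, 'v) abs_trans \<Rightarrow> 'c set" where
  "trans_consts \<delta> = abs_consts (body \<delta>) \<union> atom_consts (act \<delta>)
      \<union> (\<Union>r\<in>set (rules \<delta>). abs_consts (fst r))"

definition rmdp_consts :: "('r, 'act, 'c, 'v) abs_trans set \<Rightarrow> 'c set" where
  "rmdp_consts \<Delta> = (\<Union>\<delta>\<in>\<Delta>. trans_consts \<delta>)"

definition wf_trans :: "'r set \<Rightarrow> 'c set \<Rightarrow> ('r, 'act, 'c, 'v) abs_trans \<Rightarrow> bool" where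
  "wf_trans R D \<delta> \<longleftrightarrow>
     finite (body \<delta>) \<and> fst ` body \<delta> \<subseteq> R \<and>
     (\<forall>r\<in>set (rules \<delta>). finite (fst r) \<and> fst ` fst r \<subseteq> R \<and>
        0 \<le> snd r \<and> snd r \<le> 1 \<and> abs_vars (fst r) \<subseteq> abs_vars (body \<delta>)) \<and>
     sum_list (map snd (rules \<delta>)) = 1 \<and>
     trans_consts \<delta> \<subseteq> D"

definition wf_rmdp :: "'r set \<Rightarrow> 'c set \<Rightarrow> ('r, 'act, 'c, 'v) abs_trans set \<Rightarrow> bool" where
  "wf_rmdp R D \<Delta> \<longleftrightarrow> finite R \<and> finite \<Delta> \<and> (\<forall>\<delta>\<in>\<Delta>. wf_trans R D \<delta>)"

definition bstates :: "'r set \<Rightarrow> 'c set \<Rightarrow> nat \<Rightarrow> ('r, 'c) gatom set set" where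
  "bstates R D b = {s. (\<forall>a\<in>s. fst a \<in> R \<and> set (snd a) \<subseteq> D) \<and>
                        finite (adom s) \<and> card (adom s) \<le> b}"

definition successor :: "('r, 'c) gatom set \<Rightarrow> ('v \<Rightarrow> 'c) \<Rightarrow> ('r, 'c, 'v) atom set
                          \<Rightarrow> ('r, 'c, 'v) atom set \<Rightarrow> ('r, 'c) gatom set" where
  "successor s \<theta> B H = (s - subst_state \<theta> B) \<union> subst_state \<theta> H"

definition rename :: "('c \<Rightarrow> 'c) \<Rightarrow> ('r, 'c) gatom set \<Rightarrow> ('r, 'c) gatom set" where
  "rename f s = (\<lambda>a. (fst a, map f (snd a))) ` s"

definition ext_id :: "'c set \<Rightarrow> ('c \<Rightarrow> 'c) \<Rightarrow> 'c \<Rightarrow> 'c" where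
  "ext_id C f c = (if c \<in> C then c else f c)"

definition indist_via :: "'c set \<Rightarrow> ('c \<Rightarrow> 'c) \<Rightarrow> ('r, 'c) gatom set \<Rightarrow> ('r, 'c) gatom set \<Rightarrow> bool" where
  "indist_via C f s s' \<longleftrightarrow> C \<subseteq> gconsts s \<inter> gconsts s' \<and>
     bij_betw f (gconsts s - C) (gconsts s' - C) \<and> rename (ext_id C f) s = s'"

definition indist :: "'c set \<Rightarrow> ('r, 'c) gatom set \<Rightarrow> ('r, 'c) gatom set \<Rightarrow> bool" where
  "indist C s s' \<longleftrightarrow> (\<exists>f. indist_via C f s s')"

text \<open>Probability that s, under action alpha\<theta> of transition \<delta>, goes to the
  ~_C-class of s'.\<close>
definition class_prob :: "'c set \<Rightarrow> ('r, 'c) gatom set \<Rightarrow> ('v \<Rightarrow> 'c)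
     \<Rightarrow> ('r, 'act, 'c, 'v) abs_trans \<Rightarrow> ('r, 'c) gatom set \<Rightarrow> real" where
  "class_prob C s \<theta> \<delta> s' =
     sum_list [snd r. r \<leftarrow> rules \<delta>, indist C (successor s \<theta> (body \<delta>) (fst r)) s']"

end

theory Submission
  imports Defs
begin

text \<open>The map \<open>g = ext_id C f\<close> is injective on the constants of \<open>s1\<close> and fixes \<open>C\<close>,
  hence every constant occurring in \<open>\<delta>\<close>. Renaming by \<open>g\<close> therefore commutes with grounding
  \<open>B\<close> and \<open>H\<^sub>i\<close> and, being injective, with removing \<open>B\<theta>1\<close> from \<open>s1\<close>: each successor of \<open>s2\<close>
  under \<open>\<theta>2\<close> is the \<open>g\<close>-renaming of the corresponding successor of \<open>s1\<close> under \<open>\<theta>1\<close>. As that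
  successor only uses constants of \<open>s1\<close>, the restriction of \<open>f\<close> makes the two successors
  \<open>\<sim>\<^sub>C\<close>-indistinguishable, so they fall into the same class rule by rule.\<close>

lemma gconsts_Un: "gconsts (A \<union> B) = gconsts A \<union> gconsts B"
  unfolding gconsts_def by (rule UN_Un)

lemma gconsts_mono: "A \<subseteq> B \<Longrightarrow> gconsts A \<subseteq> gconsts B"
  unfolding gconsts_def by blast

lemma gconsts_rename: "gconsts (rename g s) = g ` gconsts s"
  unfolding gconsts_def rename_def by auto

lemma rename_comp: "rename g (rename h s) = rename (g \<circ> h) s"
  unfolding rename_def by (auto simp: image_image)

lemma rename_cong: "(\<And>c. c \<in> gconsts s \<Longrightarrow> g c = h c) \<Longrightarrow> rename g s = rename h s"
  unfolding rename_def gconsts_def by (rule image_cong) (auto intro!: map_cong)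

lemma rename_Diff:
  assumes "inj_on g (gconsts s)" and "A \<subseteq> s"
  shows "rename g (s - A) = rename g s - rename g A"
proof -
  have "inj_on (\<lambda>a. (fst a, map g (snd a))) s"
  proof (rule inj_onI)
    fix x y assume "x \<in> s" "y \<in> s" and eq: "(fst x, map g (snd x)) = (fst y, map g (snd y))"
    then have "set (snd x) \<union> set (snd y) \<subseteq> gconsts s"
      unfolding gconsts_def by blast
    then have "snd x = snd y"
      using eq map_inj_on inj_on_subset[OF assms(1)] by (metis prod.inject)
    then show "x = y" using eq by (simp add: prod_eq_iff)
  qed
  then show ?thesis unfolding rename_def by (rule inj_on_image_set_diff[OF _ Diff_subset assms(2)])
qed

lemma image_subst_trm:
  "subst_trm \<theta> ` T = (\<Union>t\<in>T. trm_consts t) \<union> \<theta> ` (\<Union>t\<in>T. trm_vars t)"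
proof -
  have "subst_trm \<theta> ` {t} = trm_consts t \<union> \<theta> ` trm_vars t" for t
    by (cases t) auto
  then have "subst_trm \<theta> ` (\<Union>t\<in>T. {t}) = (\<Union>t\<in>T. trm_consts t \<union> \<theta> ` trm_vars t)"
    unfolding image_UN by simp
  then show ?thesis by (simp add: UN_Un_distrib image_UN)
qed

lemma gconsts_subst_state: "gconsts (subst_state \<theta> A) = abs_consts A \<union> \<theta> ` abs_vars A"
  unfolding gconsts_def subst_state_def subst_atom_def abs_consts_def abs_vars_def
    atom_consts_def atom_vars_def by (simp add: image_subst_trm UN_Un_distrib image_UN)

lemma subst_state_ext_id:
  assumes "abs_consts A \<subseteq> C"
  shows "subst_state (\<lambda>v. ext_id C f (\<theta> v)) A = rename (ext_id C f) (subst_state \<theta> A)"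
proof -
  have "subst_trm (\<lambda>v. ext_id C f (\<theta> v)) t = ext_id C f (subst_trm \<theta> t)"
    if "a \<in> A" "t \<in> set (snd a)" for a t
  proof -
    have "trm_consts t \<subseteq> C"
      using that assms unfolding abs_consts_def atom_consts_def by blast
    then show ?thesis by (cases t) (auto simp: ext_id_def)
  qed
  then show ?thesis
    unfolding subst_state_def rename_def subst_atom_def image_image by (auto intro!: image_cong)
qed

lemma ext_id_inj_on:
  assumes "bij_betw f (A - C) (B - C)"
  shows "inj_on (ext_id C f) A"
  using assms unfolding inj_on_def ext_id_def bij_betw_def by (metis Diff_iff image_eqI)

lemma indist_via_trans:
  assumes "indist_via C f s t" and "indist_via C f' t u"
  shows "indist_via C (f' \<circ> f) s u"
proof -
  have "bij_betw f (gconsts s - C) (gconsts t - C)" using assms(1) by (simp add: indist_via_def)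
  then have "rename (ext_id C f') (rename (ext_id C f) s) = rename (ext_id C (f' \<circ> f)) s"
    unfolding rename_comp by (intro rename_cong) (auto simp: ext_id_def bij_betw_def)
  then show ?thesis using assms unfolding indist_via_def by (auto intro: bij_betw_trans)
qed

lemma indist_via_sym:
  assumes "indist_via C f s t"
  shows "indist_via C (the_inv_into (gconsts s - C) f) t s"
proof -
  let ?f' = "the_inv_into (gconsts s - C) f"
  have bij: "bij_betw f (gconsts s - C) (gconsts t - C)" and t: "rename (ext_id C f) s = t"
    using assms by (auto simp: indist_via_def)
  have "rename (ext_id C ?f') t = rename (ext_id C ?f' \<circ> ext_id C f) s"
    using t rename_comp by metis
  also have "\<dots> = rename id s"
    using bij by (intro rename_cong) (auto simp: ext_id_def bij_betw_def the_inv_into_f_f)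
  also have "\<dots> = s"
    unfolding rename_def by simp
  finally show ?thesis using assms bij unfolding indist_via_def by (auto intro: bij_betw_the_inv_into)
qed

lemma indist_via_imp_indist_iff:
  assumes "indist_via C f s t"
  shows "indist C s u \<longleftrightarrow> indist C t u"
  using indist_via_trans[OF assms] indist_via_trans[OF indist_via_sym[OF assms]]
  unfolding indist_def by blast

text \<open>If \<open>C \<subseteq> gconsts h\<close>, the restriction of \<open>f\<close> witnesses \<open>h \<sim>\<^sub>C rename (ext_id C f) h\<close>;
  otherwise neither state contains all of \<open>C\<close>, and both lie in no class.\<close>
lemma indist_rename_iff:
  assumes st: "indist_via C f s t" and h: "gconsts h \<subseteq> gconsts s"
  shows "indist C (rename (ext_id C f) h) u \<longleftrightarrow> indist C h u"
proof -
  let ?h' = "rename (ext_id C f) h"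
  have bij: "bij_betw f (gconsts s - C) (gconsts t - C)" using st by (simp add: indist_via_def)
  then have out: "f c \<notin> C" if "c \<in> gconsts h - C" for c
    using that h unfolding bij_betw_def by blast
  have consts_h': "gconsts ?h' = ext_id C f ` gconsts h"
    by (rule gconsts_rename)
  have C_h': "C \<inter> gconsts ?h' = C \<inter> gconsts h"
    unfolding consts_h' using out by (force simp: ext_id_def)
  show ?thesis
  proof (cases "C \<subseteq> gconsts h")
    case False
    then show ?thesis using C_h' unfolding indist_def indist_via_def by blast
  next
    case True
    have "gconsts ?h' - C = f ` (gconsts h - C)"
      unfolding consts_h' using out by (force simp: ext_id_def)
    moreover have "inj_on f (gconsts h - C)"
      using bij h unfolding bij_betw_def by (blast intro: inj_on_subset)
    ultimately have "indist_via C f h ?h'"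
      using True C_h' unfolding indist_via_def bij_betw_def by blast
    then show ?thesis by (simp add: indist_via_imp_indist_iff)
  qed
qed

lemma gconsts_successor_subset:
  assumes "subst_state \<theta> B \<subseteq> s" and "abs_consts H \<subseteq> gconsts s"
    and "abs_vars H \<subseteq> abs_vars B"
  shows "gconsts (successor s \<theta> B H) \<subseteq> gconsts s"
proof -
  have "\<theta> ` abs_vars H \<subseteq> gconsts s"
    using assms gconsts_mono[OF assms(1)] unfolding gconsts_subst_state by blast
  then show ?thesis
    using assms(2) gconsts_mono[of "s - subst_state \<theta> B" s]
    unfolding successor_def gconsts_Un gconsts_subst_state by blast
qed

lemma rename_successor:
  assumes "inj_on (ext_id C f) (gconsts s)" and "subst_state \<theta> B \<subseteq> s"
    and "abs_consts B \<subseteq> C" and "abs_consts H \<subseteq> C"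
  shows "rename (ext_id C f) (successor s \<theta> B H)
           = successor (rename (ext_id C f) s) (\<lambda>v. ext_id C f (\<theta> v)) B H"
  using assms rename_Diff[OF assms(1,2)]
  unfolding successor_def subst_state_ext_id[OF assms(3)] subst_state_ext_id[OF assms(4)]
  by (simp add: rename_def image_Un)

lemma class_prob_cong:
  assumes "\<And>r. r \<in> set (rules \<delta>) \<Longrightarrow>
     indist C (successor s \<theta> (body \<delta>) (fst r)) u \<longleftrightarrow> indist C (successor t \<theta>' (body \<delta>) (fst r)) u"
  shows "class_prob C s \<theta> \<delta> u = class_prob C t \<theta>' \<delta> u"
  unfolding class_prob_def using assms by (simp cong: map_cong)

theorem proposition2:
  fixes R :: "'r set" and D :: "'c set" and \<Delta> :: "('r, 'act, 'c, 'v) abs_trans set"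
    and b :: nat and Cphi C :: "'c set" and f :: "'c \<Rightarrow> 'c"
    and s1 s2 :: "('r, 'c) gatom set" and \<delta> :: "('r, 'act, 'c, 'v) abs_trans"
    and \<theta>1 \<theta>2 :: "'v \<Rightarrow> 'c"
  assumes "wf_rmdp R D \<Delta>"
    and "finite Cphi" and "Cphi \<subseteq> D"
    and "C = Cphi \<union> rmdp_consts \<Delta>"
    and "s1 \<in> bstates R D b" and "s2 \<in> bstates R D b"
    and "indist_via C f s1 s2"
    and "\<delta> \<in> \<Delta>"
    and "oi_subsumes s1 \<theta>1 (body \<delta>)"
    and "\<theta>2 = (\<lambda>v. ext_id C f (\<theta>1 v))"
  shows "\<forall>s'. class_prob C s1 \<theta>1 \<delta> s' = class_prob C s2 \<theta>2 \<delta> s'"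
proof (intro allI class_prob_cong)
  fix s' r assume r: "r \<in> set (rules \<delta>)"
  have C_\<delta>: "trans_consts \<delta> \<subseteq> C" using assms(4,8) unfolding rmdp_consts_def by blast
  have vars_H: "abs_vars (fst r) \<subseteq> abs_vars (body \<delta>)"
    using assms(1,8) r unfolding wf_rmdp_def wf_trans_def by blast
  have consts_H: "abs_consts (fst r) \<subseteq> C" and consts_B: "abs_consts (body \<delta>) \<subseteq> C"
    using C_\<delta> r unfolding trans_consts_def by blast+
  have C_s1: "C \<subseteq> gconsts s1" and s2: "s2 = rename (ext_id C f) s1"
    and inj: "inj_on (ext_id C f) (gconsts s1)"
    using assms(7) ext_id_inj_on unfolding indist_via_def by blast+
  have B_s1: "subst_state \<theta>1 (body \<delta>) \<subseteq> s1" using assms(9) by (simp add: oi_subsumes_def)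
  have "successor s2 \<theta>2 (body \<delta>) (fst r) = rename (ext_id C f) (successor s1 \<theta>1 (body \<delta>) (fst r))"
    unfolding s2 assms(10) using rename_successor[OF inj B_s1 consts_B consts_H] by simp
  moreover have "gconsts (successor s1 \<theta>1 (body \<delta>) (fst r)) \<subseteq> gconsts s1"
    using gconsts_successor_subset[OF B_s1 _ vars_H] consts_H C_s1 by blast
  ultimately show "indist C (successor s1 \<theta>1 (body \<delta>) (fst r)) s'
      \<longleftrightarrow> indist C (successor s2 \<theta>2 (body \<delta>) (fst r)) s'"
    using indist_rename_iff[OF assms(7)] by metis
qed

end
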